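(* Let $Q$ and $P$ be probability measures on the Borel $\sigma$-algebra of $\mathbb{R}$ with $P \gg Q$, both having densities, such that $r = dQ/dP$ is unimodal and $\sup_{x\in\mathbb{R}} r(x) < \infty$. Let $\Phi$ be the CDF of $P$ and define the measures $P' = P\circ\Phi^{-1}$ and $Q' = Q\circ \Phi^{-1}$ on $[0,1]$ (i.e. $P'(A) = P(\Phi^{-1}(A))$, $Q'(A) = Q(\Phi^{-1}(A))$). Then $P'$ is the uniform measure on $[0,1]$, the Radon–Nikodym derivative $dQ'/dP'$ is unimodal, and $$\log \sup_{z\in[0,1]} \frac{dQ'}{dP'}(z) = \log\sup_{x\in\mathbb{R}} \frac{dQ}{dP}(x).$$
   Context: A function $f$ on an interval is unimodal if there is a point $x^*$ such that $f$ is non-decreasing to the left of $x^*$ and non-increasing to the right of $x^*$. *)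

theory Defs
  imports "HOL-Probability.Probability"
begin

definition unimodal_on :: "real set \<Rightarrow> (real \<Rightarrow> real) \<Rightarrow> bool" where
  "unimodal_on S f \<longleftrightarrow>
     (\<exists>c. mono_on {x\<in>S. x \<le> c} f \<and> antimono_on {x\<in>S. c \<le> x} f)"

end

theory Submission
  imports Defs
begin

text \<open>The quantile function \<open>I\<close> of the cdf \<open>\<Phi>\<close> of \<open>P\<close> pushes Lebesgue measure on \<open>(0,1)\<close>
forward to \<open>P\<close>, and \<open>\<Phi> \<circ> I\<close> is the identity on \<open>(0,1)\<close> because \<open>P\<close> has no atoms. Hence \<open>\<Phi>\<close>
maps \<open>P\<close> to the uniform distribution and \<open>Q = r \<cdot> P\<close> to \<open>(r \<circ> I) \<cdot> uniform\<close>. As \<open>I\<close> is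
monotone, \<open>r \<circ> I\<close> is again unimodal, with its mode at the point \<open>d\<close> where \<open>I\<close> crosses the mode
of \<open>r\<close>. A density is only determined almost everywhere, so its value at \<open>d\<close> may be raised to
\<open>sup r\<close>: this keeps it unimodal and makes the two suprema agree even when \<open>I\<close> skips the region
where \<open>r\<close> is largest.\<close>

lemma measure_density_lborel_singleton:
  assumes "f \<in> borel_measurable borel"
  shows "measure (density lborel f) {x} = 0"
proof -
  have "{x} \<in> null_sets (density lborel f)"
    using absolutely_continuousI_density[of f lborel] assms finite_imp_null_set_lborel[of "{x}"]
    by (auto simp: absolutely_continuous_def)
  then show ?thesis
    by (simp add: measure_def null_setsD1)
qed

lemma unimodal_onI_peak:
  fixes f :: "real \<Rightarrow> real"
  assumes left: "mono_on {x \<in> S. x < d} f" and right: "antimono_on {x \<in> S. d < x} f"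
    and peak: "\<And>x. x \<in> S \<Longrightarrow> f x \<le> f d"
  shows "unimodal_on S f"
  unfolding unimodal_on_def
proof (intro exI conjI monotone_onI)
  fix x y assume "x \<in> {x \<in> S. x \<le> d}" "y \<in> {x \<in> S. x \<le> d}" "x \<le> y"
  then show "f x \<le> f y"
    using left peak by (cases "y = d") (auto simp: monotone_on_def)
next
  fix x y assume "x \<in> {x \<in> S. d \<le> x}" "y \<in> {x \<in> S. d \<le> x}" "x \<le> y"
  then show "f y \<le> f x"
    using right peak by (cases "x = d") (auto simp: monotone_on_def)
qed

lemma unimodal_comp_mono_on:
  fixes r g :: "real \<Rightarrow> real"
  assumes r_left: "mono_on {x. x \<le> c} r" and r_right: "antimono_on {x. c \<le> x} r"
    and g: "mono_on S g" and S: "S \<subseteq> {a..b}" "a \<le> b"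
  obtains d where "d \<in> {a..b}"
    "mono_on {z \<in> S. z < d} (\<lambda>z. r (g z))" "antimono_on {z \<in> S. d < z} (\<lambda>z. r (g z))"
proof -
  define A where "A = insert a {z \<in> S. g z \<le> c}"
  have bdd: "bdd_above A"
    using S by (auto simp: A_def bdd_above_def intro!: exI[of _ b])
  have "a \<le> Sup A"
    using bdd by (auto simp: A_def intro: cSup_upper)
  moreover have "Sup A \<le> b"
    using S by (intro cSup_least) (auto simp: A_def)
  ultimately have d: "Sup A \<in> {a..b}" by simp
  have below: "g z \<le> c" if z: "z \<in> S" "z < Sup A" for z
  proof -
    obtain y where "y \<in> A" "z < y"
      using z less_cSupD[of A z] by (auto simp: A_def)
    with S z have "y \<in> S" "g y \<le> c"
      by (auto simp: A_def)
    with g z \<open>z < y\<close> show ?thesis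
      by (meson monotone_onD less_imp_le order_trans)
  qed
  have above: "c \<le> g z" if "z \<in> S" "Sup A < z" for z
    using that cSup_upper[OF _ bdd, of z] by (force simp: A_def)
  show thesis
  proof (rule that[OF d]; intro monotone_onI)
    fix x y assume "x \<in> {z \<in> S. z < Sup A}" "y \<in> {z \<in> S. z < Sup A}" "x \<le> y"
    then show "r (g x) \<le> r (g y)"
      using below g r_left by (auto simp: monotone_on_def)
  next
    fix x y assume "x \<in> {z \<in> S. Sup A < z}" "y \<in> {z \<in> S. Sup A < z}" "x \<le> y"
    then show "r (g y) \<le> r (g x)"
      using above g r_right by (auto simp: monotone_on_def)
  qed
qed

lemma unimodal_on_unit_interval_comp_mono_on:
  fixes r g :: "real \<Rightarrow> real"
  assumes r: "unimodal_on UNIV r" and r_nonneg: "\<And>x. 0 \<le> r x" and r_le: "\<And>x. r x \<le> m"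
    and g: "mono_on {0<..<1} g"
  obtains d where "d \<in> {0..1}"
    "unimodal_on {0..1} (\<lambda>z. if z = d then m else if z \<in> {0<..<1} then r (g z) else 0)"
proof -
  obtain c where "mono_on {x. x \<le> c} r" "antimono_on {x. c \<le> x} r"
    using r by (auto simp: unimodal_on_def)
  moreover have "{0<..<1} \<subseteq> {0..1::real}" by auto
  ultimately obtain d where d: "d \<in> {0..1}"
    and left: "mono_on {z \<in> {0<..<1}. z < d} (\<lambda>z. r (g z))"
    and right: "antimono_on {z \<in> {0<..<1}. d < z} (\<lambda>z. r (g z))"
    using unimodal_comp_mono_on[OF _ _ g _ zero_le_one] by blast
  define f where "f z = (if z = d then m else if z \<in> {0<..<1} then r (g z) else 0)" for z
  have "mono_on {z \<in> {0..1}. z < d} f"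
  proof (rule monotone_onI)
    fix x y assume x: "x \<in> {z \<in> {0..1}. z < d}" and y: "y \<in> {z \<in> {0..1}. z < d}" and "x \<le> y"
    show "f x \<le> f y"
    proof (cases "x = 0")
      case True
      then show ?thesis using x y r_nonneg by (auto simp: f_def)
    next
      case False
      with x y \<open>x \<le> y\<close> d show ?thesis using left by (auto simp: f_def monotone_on_def)
    qed
  qed
  moreover have "antimono_on {z \<in> {0..1}. d < z} f"
  proof (rule monotone_onI)
    fix x y assume x: "x \<in> {z \<in> {0..1}. d < z}" and y: "y \<in> {z \<in> {0..1}. d < z}" and "x \<le> y"
    show "f y \<le> f x"
    proof (cases "y = 1")
      case True
      then show ?thesis using x y r_nonneg by (auto simp: f_def)
    next
      case False
      with x y \<open>x \<le> y\<close> d show ?thesis using right by (auto simp: f_def monotone_on_def)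
    qed
  qed
  moreover have "f z \<le> f d" for z
    using r_le order_trans[OF r_nonneg r_le] by (auto simp: f_def)
  ultimately show thesis
    using that[OF d] unimodal_onI_peak by (auto simp: f_def[abs_def])
qed

lemma distr_restrict_space_unit_interval:
  "distr (restrict_space lborel {0<..<1::real}) borel (\<lambda>x. x) = uniform_measure lborel {0..1}"
  (is "distr ?\<Omega> borel _ = _")
proof (rule measure_eqI)
  fix A :: "real set" assume "A \<in> sets (distr ?\<Omega> borel (\<lambda>x. x))"
  then have A: "A \<in> sets borel" by simp
  have id: "(\<lambda>x. x) \<in> measurable ?\<Omega> borel"
    by (intro measurable_restrict_space1) simp
  have "AE x in lborel. x \<noteq> 0 \<and> x \<noteq> (1::real)"
    using AE_lborel_singleton[of 0] AE_lborel_singleton[of 1] by eventually_elim auto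
  then have "emeasure lborel (A \<inter> {0<..<1}) = emeasure lborel ({0..1} \<inter> A)"
    using A by (intro emeasure_eq_AE) auto
  then show "emeasure (distr ?\<Omega> borel (\<lambda>x. x)) A = emeasure (uniform_measure lborel {0..1}) A"
    using A by (simp add: emeasure_distr[OF id] emeasure_restrict_space space_restrict_space divide_ennreal_def)
qed simp

text \<open>In the locale \<^locale>\<open>cdf_distribution\<close>, \<open>C\<close> is the cdf of \<open>M\<close> and
\<open>I \<omega> = Inf {x. \<omega> \<le> C x}\<close> its quantile function; the library lemma \<open>distr_I_eq_M\<close> says
that \<open>I\<close> maps Lebesgue measure on \<open>(0,1)\<close> to \<open>M\<close>.\<close>

context cdf_distribution
begin

lemma measurable_I_borel[measurable]: "I \<in> borel_measurable borel"
proof (rule borel_measurable_piecewise_mono[of "{{..0}, {0<..<1}, {1}, {1<..}}"])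
  have low: "I \<omega> = Inf UNIV" if "\<omega> \<le> 0" for \<omega>
  proof -
    have "\<omega> \<le> C x" for x
      using cdf_nonneg[of x] that by linarith
    then show ?thesis by simp
  qed
  have high: "I \<omega> = Inf {}" if "1 < \<omega>" for \<omega>
  proof -
    have "\<not> \<omega> \<le> C x" for x
      using cdf_bounded_prob[of x] that by linarith
    then show ?thesis by simp
  qed
  show "mono_on c I" if "c \<in> {{..0}, {0<..<1}, {1}, {1<..}}" for c
    using that mono_I by (auto simp: monotone_on_def low high)
  show "\<Union>{{..0}, {0<..<1}, {1}, {1<..}} = (UNIV :: real set)"
    by (auto simp: not_le)
qed auto

lemma cdf_I:
  assumes "\<omega> \<in> {0<..<1}" and "measure M {I \<omega>} = 0"
  shows "C (I \<omega>) = \<omega>"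
proof (rule antisym)
  have "(C \<longlongrightarrow> C (I \<omega>)) (at_left (I \<omega>))"
    using assms(2) isCont_cdf[of "I \<omega>"] unfolding continuous_at filterlim_at_split by blast
  moreover have "\<forall>\<^sub>F x in at_left (I \<omega>). C x \<le> \<omega>"
  proof -
    have "\<forall>\<^sub>F x in at_left (I \<omega>). x < I \<omega>" by (simp add: eventually_at_filter)
    then show ?thesis
    proof (rule eventually_mono)
      fix x assume "x < I \<omega>"
      then have "\<not> \<omega> \<le> C x" using assms(1) pseudoinverse[of \<omega> x] by simp
      then show "C x \<le> \<omega>" by simp
    qed
  qed
  ultimately show "C (I \<omega>) \<le> \<omega>"
    by (rule tendsto_upperbound) simp
  show "\<omega> \<le> C (I \<omega>)"
    using assms(1) pseudoinverse[of \<omega> "I \<omega>"] by simp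
qed

lemma distr_density_cdf:
  assumes no_atoms: "\<And>x. measure M {x} = 0" and [measurable]: "h \<in> borel_measurable borel"
  shows "distr (density M h) borel C = density (uniform_measure lborel {0..1}) (\<lambda>\<omega>. h (I \<omega>))"
proof -
  let ?\<Omega> = "restrict_space lborel {0<..<1::real}"
  have [measurable]: "I \<in> measurable ?\<Omega> borel" "(\<lambda>\<omega>. \<omega>) \<in> measurable ?\<Omega> borel"
    by (intro measurable_restrict_space1; simp)+
  have "density M h = distr (density ?\<Omega> (\<lambda>\<omega>. h (I \<omega>))) borel I"
    by (subst (1) distr_I_eq_M[symmetric]) (rule density_distr; measurable)
  then have "distr (density M h) borel C = distr (density ?\<Omega> (\<lambda>\<omega>. h (I \<omega>))) borel (\<lambda>\<omega>. C (I \<omega>))"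
    by (simp add: distr_distr comp_def)
  also have "\<dots> = distr (density ?\<Omega> (\<lambda>\<omega>. h (I \<omega>))) borel (\<lambda>\<omega>. \<omega>)"
    by (rule distr_cong) (auto simp: space_restrict_space cdf_I no_atoms)
  also have "\<dots> = density (distr ?\<Omega> borel (\<lambda>\<omega>. \<omega>)) (\<lambda>\<omega>. h (I \<omega>))"
    by (rule density_distr[symmetric]) simp_all
  finally show ?thesis
    by (simp add: distr_restrict_space_unit_interval)
qed

lemma distr_cdf_uniform:
  assumes "\<And>x. measure M {x} = 0"
  shows "distr M borel C = uniform_measure lborel {0..1}"
  using distr_density_cdf[OF assms, of "\<lambda>_. 1"] by (simp add: density_1)

end

theorem mainTheorem2:
  fixes P Q :: "real measure" and r :: "real \<Rightarrow> real"
  assumes "prob_space P" and "prob_space Q"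
    and "sets P = sets borel" and "sets Q = sets borel"
    and "absolutely_continuous P Q"
    and "\<exists>f. f \<in> borel_measurable borel \<and> (\<forall>x. 0 \<le> f x) \<and>
               P = density lborel (\<lambda>x. ennreal (f x))"
    and "\<exists>g. g \<in> borel_measurable borel \<and> (\<forall>x. 0 \<le> g x) \<and>
               Q = density lborel (\<lambda>x. ennreal (g x))"
    and "r \<in> borel_measurable borel" and "\<forall>x. 0 \<le> r x"
    and "Q = density P (\<lambda>x. ennreal (r x))"
    and "unimodal_on UNIV r"
    and "bdd_above (range r)"
  shows "distr P borel (cdf P) = uniform_measure lborel {0..1} \<and>
         (\<exists>r'. r' \<in> borel_measurable borel \<and> (\<forall>z. 0 \<le> r' z) \<and>
               distr Q borel (cdf P) = density (distr P borel (cdf P)) (\<lambda>z. ennreal (r' z)) \<and>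
               unimodal_on {0..1} r' \<and> bdd_above (r' ` {0..1}) \<and>
               ln (SUP z\<in>{0..1}. r' z) = ln (SUP x. r x))"
proof -
  interpret P: cdf_distribution P
    using assms(1,3) by (simp add: cdf_distribution_def real_distribution_def real_distribution_axioms_def)
  obtain f where "f \<in> borel_measurable borel" "P = density lborel (\<lambda>x. ennreal (f x))"
    using assms(6) by blast
  then have no_atoms: "measure P {x} = 0" for x
    by (simp add: measure_density_lborel_singleton)
  define m where "m = (SUP x. r x)"
  have r_le: "r x \<le> m" for x
    using assms(12) by (simp add: m_def cSUP_upper)
  obtain d where d: "d \<in> {0..1}"
    and unimodal: "unimodal_on {0..1} (\<lambda>z. if z = d then m else if z \<in> {0<..<1} then r (P.I z) else 0)"
    using unimodal_on_unit_interval_comp_mono_on[OF assms(11) _ r_le P.mono_I] assms(9) by blast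
  define r' where "r' z = (if z = d then m else if z \<in> {0<..<1} then r (P.I z) else 0)" for z
  have r'_bounds: "0 \<le> r' z" "r' z \<le> m" for z
    using assms(9) r_le order_trans[OF _ r_le] by (auto simp: r'_def)
  have r'_measurable: "r' \<in> borel_measurable borel"
    using assms(8) unfolding r'_def[abs_def] by measurable
  have uniform: "distr P borel (cdf P) = uniform_measure lborel {0..1}"
    by (rule P.distr_cdf_uniform[OF no_atoms])
  have "AE z in lborel. z \<notin> {0, 1, d}"
    by (intro AE_not_in finite_imp_null_set_lborel) simp
  then have "AE z in uniform_measure lborel {0..1}. ennreal (r (P.I z)) = ennreal (r' z)"
    by (intro AE_uniform_measureI) (simp, erule eventually_mono, simp add: r'_def)
  then have density: "distr Q borel (cdf P) = density (distr P borel (cdf P)) (\<lambda>z. ennreal (r' z))"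
    unfolding assms(10) uniform using assms(8) r'_measurable
    by (simp add: P.distr_density_cdf[OF no_atoms] density_cong)
  have "r' d = m"
    by (simp add: r'_def)
  then have "(SUP z\<in>{0..1}. r' z) = m"
    using d r'_bounds(2) by (intro cSup_eq_maximum) (auto simp: image_iff intro: bexI[of _ d])
  moreover have "unimodal_on {0..1} r'"
    using unimodal by (simp add: r'_def[abs_def])
  moreover have "bdd_above (r' ` {0..1})"
    using r'_bounds(2) by (auto simp: bdd_above_def)
  ultimately show ?thesis
    using uniform density r'_bounds(1) r'_measurable by (auto simp: m_def)
qed

end
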